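(* If $n\ge 1$ and $k\ge 2$ are integers, then the diameter of the $k$-Pell graph $\Pi_{n,k}$ is $$\operatorname{diam}(\Pi_{n,k})=nk-\left\lceil \frac{n}{2}\right\rceil.$$
   Context: For an integer $k\ge 2$, a $k$-Pell string is a finite word over the alphabet $\{0,1,\ldots,k-1,kk\}$, i.e. a word over $\{0,1,\ldots,k\}$ in which every maximal run of the letter $k$ has even length. For $n\ge 0$, the $k$-Pell graph $\Pi_{n,k}$ has as vertices all $k$-Pell strings of length $n$, and two vertices are adjacent if one is obtained from the other either by replacing a single letter $i$ by $i+1$ (or vice versa) for some $i\in\{0,1,\ldots,k-2\}$, or by replacing one factor $(k-1)(k-1)$ by $kk$ (or vice versa), in such a way that the resulting string is again a $k$-Pell string. *)

theory Defs
  imports Main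
begin

text \<open>Letters are natural numbers 0..k; the letter k only occurs in maximal runs
 of even length (i.e. words over the alphabet {0,...,k-1,kk}).\<close>

inductive pell_string :: "nat \<Rightarrow> nat list \<Rightarrow> bool" for k where
  nil:  "pell_string k []"
| small: "i < k \<Longrightarrow> pell_string k w \<Longrightarrow> pell_string k (i # w)"
| kk:   "pell_string k w \<Longrightarrow> pell_string k (k # k # w)"

definition pell_vertices :: "nat \<Rightarrow> nat \<Rightarrow> nat list set" where
  "pell_vertices n k = {w. length w = n \<and> pell_string k w}"

definition pell_step :: "nat \<Rightarrow> nat list \<Rightarrow> nat list \<Rightarrow> bool" where
  "pell_step k u v \<longleftrightarrow>
     (\<exists>x y i. i + 2 \<le> k \<and> u = x @ [i] @ y \<and> v = x @ [i + 1] @ y) \<or>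
     (\<exists>x y. u = x @ [k - 1, k - 1] @ y \<and> v = x @ [k, k] @ y)"

definition pell_adj :: "nat \<Rightarrow> nat \<Rightarrow> nat list \<Rightarrow> nat list \<Rightarrow> bool" where
  "pell_adj n k u v \<longleftrightarrow> u \<in> pell_vertices n k \<and> v \<in> pell_vertices n k \<and>
     (pell_step k u v \<or> pell_step k v u)"

fun pell_walk :: "nat \<Rightarrow> nat \<Rightarrow> nat \<Rightarrow> nat list \<Rightarrow> nat list \<Rightarrow> bool" where
  "pell_walk n k 0 u v \<longleftrightarrow> u \<in> pell_vertices n k \<and> u = v"
| "pell_walk n k (Suc m) u v \<longleftrightarrow> (\<exists>w. pell_adj n k u w \<and> pell_walk n k m w v)"

definition pell_dist :: "nat \<Rightarrow> nat \<Rightarrow> nat list \<Rightarrow> nat list \<Rightarrow> nat" where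
  "pell_dist n k u v = (LEAST m. pell_walk n k m u v)"

definition pell_connected :: "nat \<Rightarrow> nat \<Rightarrow> bool" where
  "pell_connected n k \<longleftrightarrow> (\<forall>u\<in>pell_vertices n k. \<forall>v\<in>pell_vertices n k. \<exists>m. pell_walk n k m u v)"

definition pell_diam :: "nat \<Rightarrow> nat \<Rightarrow> nat" where
  "pell_diam n k = Max {pell_dist n k u v | u v. u \<in> pell_vertices n k \<and> v \<in> pell_vertices n k}"

end

theory Submission
  imports Defs
begin

text \<open>Write D(n) = nk - \<lceil>n/2\<rceil>. The upper bound on distances is proved by induction on n,
 splitting off the first letter or the first block kk; the induction goes through only together
 with the sharper bound D(n) - (k-1) on the distance from a word beginning with k-1 to a word
 beginning with kk. For the lower bound, weigh a letter i < k by 2i and the letter k by 2k-1: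
 then every edge changes the total weight by exactly 2, the word 0...0 has weight 0 and the
 word kk...kk (followed by k-1 when n is odd) has weight 2D(n).\<close>

definition pell_diam_bound :: "nat \<Rightarrow> nat \<Rightarrow> nat" where
  "pell_diam_bound n k = n * k - (n + 1) div 2"

lemma Suc_div_2_le_mult:
  fixes n k :: nat
  assumes "0 < k"
  shows "(n + 1) div 2 \<le> n * k"
proof -
  have "(n + 1) div 2 \<le> n" by presburger
  also have "n \<le> n * k" using assms by simp
  finally show ?thesis .
qed

lemma pell_diam_bound_Suc:
  assumes "0 < k"
  shows "pell_diam_bound n k + k \<le> pell_diam_bound (Suc n) k + 1"
  using Suc_div_2_le_mult[OF assms, of n] Suc_div_2_le_mult[OF assms, of "Suc n"]
  unfolding pell_diam_bound_def by simp

lemma pell_diam_bound_Suc_Suc: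
  assumes "0 < k"
  shows "pell_diam_bound (Suc (Suc n)) k = pell_diam_bound n k + 2 * k - 1"
  using Suc_div_2_le_mult[OF assms, of n] assms
  unfolding pell_diam_bound_def by simp

lemma pell_string_Cons_less_iff: "a < k \<Longrightarrow> pell_string k (a # w) \<longleftrightarrow> pell_string k w"
  by (auto elim: pell_string.cases intro: pell_string.intros)

lemma pell_string_kk_iff: "pell_string k (k # k # w) \<longleftrightarrow> pell_string k w"
  by (auto elim: pell_string.cases intro: pell_string.intros)

lemma pell_string_ConsE:
  assumes "pell_string k (a # w)"
  obtains "a < k" "pell_string k w"
    | w' where "a = k" "w = k # w'" "pell_string k w'"
  using assms by (cases rule: pell_string.cases) auto

lemma pell_string_append: "pell_string k u \<Longrightarrow> pell_string k w \<Longrightarrow> pell_string k (u @ w)"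
  by (induction rule: pell_string.induct) (auto intro: pell_string.intros)

lemma pell_string_letters: "pell_string k w \<Longrightarrow> set w \<subseteq> {..k}"
  by (induction rule: pell_string.induct) auto

lemma pell_string_replicate: "i < k \<Longrightarrow> pell_string k (replicate n i)"
  by (induction n) (auto intro: pell_string.intros)

lemma pell_vertices_Cons_less_iff [simp]:
  "a < k \<Longrightarrow> a # x \<in> pell_vertices (Suc n) k \<longleftrightarrow> x \<in> pell_vertices n k"
  by (simp add: pell_vertices_def pell_string_Cons_less_iff)

lemma pell_vertices_kk_iff [simp]:
  "k # k # x \<in> pell_vertices (Suc (Suc n)) k \<longleftrightarrow> x \<in> pell_vertices n k"
  by (simp add: pell_vertices_def pell_string_kk_iff)

lemma pell_vertices_SucE:
  assumes "u \<in> pell_vertices (Suc n) k"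
  obtains a x where "a < k" "u = a # x" "x \<in> pell_vertices n k"
    | x n' where "n = Suc n'" "u = k # k # x" "x \<in> pell_vertices n' k"
proof -
  obtain a x where u: "u = a # x" "pell_string k (a # x)" "length x = n"
    using assms by (cases u) (auto simp: pell_vertices_def)
  from u(2) show thesis
  proof (cases rule: pell_string_ConsE)
    case 1
    then show thesis using that(1) u by (simp add: pell_vertices_def)
  next
    case (2 x')
    then show thesis using that(2)[of _ x'] u by (auto simp: pell_vertices_def)
  qed
qed

lemma finite_pell_vertices: "finite (pell_vertices n k)"
proof (rule finite_subset)
  show "pell_vertices n k \<subseteq> {w. set w \<subseteq> {..k} \<and> length w = n}"
    using pell_string_letters by (auto simp: pell_vertices_def)
qed (simp add: finite_lists_length_eq)

lemma pell_step_append: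
  assumes "pell_step k u v"
  shows "pell_step k (p @ u @ s) (p @ v @ s)"
  using assms unfolding pell_step_def
proof (elim disjE exE conjE)
  fix x y i
  assume "i + 2 \<le> k" "u = x @ [i] @ y" "v = x @ [i + 1] @ y"
  then show "(\<exists>x y i. i + 2 \<le> k \<and> p @ u @ s = x @ [i] @ y \<and> p @ v @ s = x @ [i + 1] @ y) \<or>
    (\<exists>x y. p @ u @ s = x @ [k - 1, k - 1] @ y \<and> p @ v @ s = x @ [k, k] @ y)"
    by (intro disjI1 exI[of _ "p @ x"] exI[of _ "y @ s"] exI[of _ i]) simp
next
  fix x y
  assume "u = x @ [k - 1, k - 1] @ y" "v = x @ [k, k] @ y"
  then show "(\<exists>x y i. i + 2 \<le> k \<and> p @ u @ s = x @ [i] @ y \<and> p @ v @ s = x @ [i + 1] @ y) \<or>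
    (\<exists>x y. p @ u @ s = x @ [k - 1, k - 1] @ y \<and> p @ v @ s = x @ [k, k] @ y)"
    by (intro disjI2 exI[of _ "p @ x"] exI[of _ "y @ s"]) simp
qed

lemma pell_walk_vertices: "pell_walk n k m u v \<Longrightarrow> u \<in> pell_vertices n k \<and> v \<in> pell_vertices n k"
  by (induction m arbitrary: u) (auto simp: pell_adj_def)

lemma pell_walk_trans:
  "pell_walk n k m u w \<Longrightarrow> pell_walk n k m' w v \<Longrightarrow> pell_walk n k (m + m') u v"
  by (induction m arbitrary: u) auto

lemma pell_walk_sym: "pell_walk n k m u v \<Longrightarrow> pell_walk n k m v u"
proof (induction m arbitrary: u)
  case (Suc m)
  then obtain w where "pell_adj n k u w" "pell_walk n k m w v"
    by auto
  then have "pell_walk n k m v w" "pell_walk n k 1 w u"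
    using Suc.IH by (auto simp: pell_adj_def)
  from pell_walk_trans[OF this] show ?case
    by simp
qed simp

lemma pell_walk_frame:
  assumes "pell_walk n k m u v" "pell_string k p" "pell_string k s"
  shows "pell_walk (length p + n + length s) k m (p @ u @ s) (p @ v @ s)"
  using assms(1)
proof (induction m arbitrary: u)
  case 0
  then show ?case
    using assms(2,3) by (auto simp: pell_vertices_def pell_string_append)
next
  case (Suc m)
  then obtain w where w: "pell_adj n k u w" "pell_walk n k m w v"
    by auto
  then have "pell_adj (length p + n + length s) k (p @ u @ s) (p @ w @ s)"
    using assms(2,3) pell_step_append[of k u w p s] pell_step_append[of k w u p s]
    by (auto simp: pell_adj_def pell_vertices_def pell_string_append)
  then show ?case
    using Suc.IH[OF w(2)] by auto
qed

lemma pell_walk_append: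
  assumes "pell_walk n k m u v" "pell_walk n' k m' u' v'"
  shows "pell_walk (n + n') k (m + m') (u @ u') (v @ v')"
proof -
  have "u' \<in> pell_vertices n' k" "v \<in> pell_vertices n k"
    using assms pell_walk_vertices by blast+
  then have "pell_walk (n + n') k m (u @ u') (v @ u')" "pell_walk (n + n') k m' (v @ u') (v @ v')"
    using pell_walk_frame[OF assms(1) pell_string.nil, of u']
      pell_walk_frame[OF assms(2) _ pell_string.nil, of v]
    by (auto simp: pell_vertices_def)
  then show ?thesis
    by (rule pell_walk_trans)
qed

lemma pell_walk_letter_up: "a + d < k \<Longrightarrow> pell_walk 1 k d [a] [a + d]"
proof (induction d)
  case 0
  then show ?case
    by (simp add: pell_vertices_def pell_string_Cons_less_iff pell_string.nil)
next
  case (Suc d)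
  have "pell_step k [a + d] [a + Suc d]"
    using Suc.prems unfolding pell_step_def by (auto intro!: exI[of _ "[]"])
  then have "pell_walk 1 k 1 [a + d] [a + Suc d]"
    using Suc.prems
    by (auto simp: pell_adj_def pell_vertices_def pell_string_Cons_less_iff pell_string.nil)
  then show ?case
    using pell_walk_trans Suc by fastforce
qed

lemma pell_walk_letters:
  assumes "a < k" "b < k"
  obtains m where "m < k" "pell_walk 1 k m [a] [b]"
proof (cases "a \<le> b")
  case True
  then show thesis
    using that[of "b - a"] pell_walk_letter_up[of a "b - a" k] assms by simp
next
  case False
  then show thesis
    using that[of "a - b"] pell_walk_letter_up[of b "a - b" k] assms pell_walk_sym by simp
qed

lemma pell_walk_Cons:
  assumes "a < k" "pell_walk n k m x y"
  shows "pell_walk (Suc n) k m (a # x) (a # y)"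
proof -
  have "pell_walk 1 k 0 [a] [a]"
    using assms(1) by (simp add: pell_vertices_def pell_string_Cons_less_iff pell_string.nil)
  from pell_walk_append[OF this assms(2)] show ?thesis
    by simp
qed

lemma pell_walk_kk_refl: "pell_walk 2 k 0 [k, k] [k, k]"
  by (simp add: pell_vertices_def pell_string_kk_iff pell_string.nil)

lemma pell_walk_kk: "0 < k \<Longrightarrow> pell_walk 2 k 1 [k - 1, k - 1] [k, k]"
  by (auto simp: pell_adj_def pell_vertices_def pell_step_def pell_string_Cons_less_iff
      pell_string_kk_iff pell_string.nil intro!: exI[of _ "[]"])

definition pell_walks_bounded :: "nat \<Rightarrow> nat \<Rightarrow> bool" where
  "pell_walks_bounded n k \<longleftrightarrow>
     (\<forall>u\<in>pell_vertices n k. \<forall>v\<in>pell_vertices n k.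
        \<exists>m \<le> pell_diam_bound n k. pell_walk n k m u v)"

definition pell_walks_to_kk_bounded :: "nat \<Rightarrow> nat \<Rightarrow> bool" where
  "pell_walks_to_kk_bounded n k \<longleftrightarrow>
     (\<forall>x y. (k - 1) # x \<in> pell_vertices n k \<longrightarrow> k # k # y \<in> pell_vertices n k \<longrightarrow>
        (\<exists>m. m + k \<le> pell_diam_bound n k + 1 \<and> pell_walk n k m ((k - 1) # x) (k # k # y)))"

lemma pell_walks_to_kk_bounded_Suc_Suc:
  assumes k: "2 \<le> k" and bounded: "pell_walks_bounded n k"
    and to_kk: "pell_walks_to_kk_bounded (Suc n) k"
  shows "pell_walks_to_kk_bounded (Suc (Suc n)) k"
  unfolding pell_walks_to_kk_bounded_def
proof (intro allI impI)
  fix x y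
  assume x: "(k - 1) # x \<in> pell_vertices (Suc (Suc n)) k"
    and y: "k # k # y \<in> pell_vertices (Suc (Suc n)) k"
  have km: "k - 1 < k" using k by simp
  have y_vert: "y \<in> pell_vertices n k" using y by simp
  then have "pell_walk n k 0 y y" by simp
  from pell_walk_append[OF pell_walk_kk this]
  have last_step: "pell_walk (Suc (Suc n)) k 1 ((k - 1) # (k - 1) # y) (k # k # y)"
    using k by simp
  have x_tail: "x \<in> pell_vertices (Suc n) k" using x km by simp
  then show "\<exists>m. m + k \<le> pell_diam_bound (Suc (Suc n)) k + 1 \<and>
      pell_walk (Suc (Suc n)) k m ((k - 1) # x) (k # k # y)"
  proof (cases rule: pell_vertices_SucE)
    case (1 c x')
    obtain m1 where m1: "m1 < k" "pell_walk 1 k m1 [c] [k - 1]"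
      using pell_walk_letters[OF \<open>c < k\<close> km] .
    obtain m2 where m2: "m2 \<le> pell_diam_bound n k" "pell_walk n k m2 x' y"
      using bounded \<open>x' \<in> pell_vertices n k\<close> y_vert unfolding pell_walks_bounded_def by blast
    have "pell_walk (Suc (Suc n)) k (m1 + m2) ((k - 1) # x) ((k - 1) # (k - 1) # y)"
      using pell_walk_Cons[OF km pell_walk_append[OF m1(2) m2(2)]] 1 by simp
    moreover have "m1 + m2 + 1 + k \<le> pell_diam_bound (Suc (Suc n)) k + 1"
      using m1(1) m2(1) pell_diam_bound_Suc_Suc[of k n] k by simp
    ultimately show ?thesis
      using pell_walk_trans[OF _ last_step] by blast
  next
    case 2
    have "(k - 1) # y \<in> pell_vertices (Suc n) k" using y_vert km by simp
    then obtain m where m: "m + k \<le> pell_diam_bound (Suc n) k + 1"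
      "pell_walk (Suc n) k m ((k - 1) # y) x"
      using to_kk x_tail 2 unfolding pell_walks_to_kk_bounded_def by blast
    have "pell_walk (Suc (Suc n)) k m ((k - 1) # x) ((k - 1) # (k - 1) # y)"
      using pell_walk_Cons[OF km pell_walk_sym[OF m(2)]] .
    moreover have "m + 1 + k \<le> pell_diam_bound (Suc (Suc n)) k + 1"
      using m(1) pell_diam_bound_Suc[of k "Suc n"] k by simp
    ultimately show ?thesis
      using pell_walk_trans[OF _ last_step] by blast
  qed
qed

lemma pell_walk_to_kk:
  assumes "0 < k" "pell_walks_to_kk_bounded (Suc n) k" "a < k"
    and "x \<in> pell_vertices n k" "k # k # y \<in> pell_vertices (Suc n) k"
  obtains m where "m \<le> pell_diam_bound (Suc n) k" "pell_walk (Suc n) k m (a # x) (k # k # y)"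
proof -
  have km: "k - 1 < k" using assms(1) by simp
  obtain m1 where m1: "m1 < k" "pell_walk 1 k m1 [a] [k - 1]"
    using pell_walk_letters[OF assms(3) km] .
  have "pell_walk n k 0 x x" using assms(4) by simp
  from pell_walk_append[OF m1(2) this]
  have "pell_walk (Suc n) k m1 (a # x) ((k - 1) # x)" by simp
  moreover obtain m2 where "m2 + k \<le> pell_diam_bound (Suc n) k + 1"
    "pell_walk (Suc n) k m2 ((k - 1) # x) (k # k # y)"
    using assms(2,4,5) km unfolding pell_walks_to_kk_bounded_def by fastforce
  ultimately show thesis
    using that[of "m1 + m2"] m1(1) pell_walk_trans by fastforce
qed

lemma pell_walks_bounded_Suc:
  assumes k: "2 \<le> k" and bounded: "\<And>j. j \<le> n \<Longrightarrow> pell_walks_bounded j k"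
    and to_kk: "pell_walks_to_kk_bounded (Suc n) k"
  shows "pell_walks_bounded (Suc n) k"
proof -
  have mixed: "\<exists>m \<le> pell_diam_bound (Suc n) k. pell_walk (Suc n) k m u v \<and> pell_walk (Suc n) k m v u"
    if "a < k" "u = a # x" "x \<in> pell_vertices n k" "v = k # k # y" "v \<in> pell_vertices (Suc n) k"
    for a x y u v
  proof -
    from k have "0 < k" by simp
    from pell_walk_to_kk[OF this to_kk that(1,3)] that show ?thesis
      by (metis pell_walk_sym)
  qed
  have "\<exists>m \<le> pell_diam_bound (Suc n) k. pell_walk (Suc n) k m u v"
    if u: "u \<in> pell_vertices (Suc n) k" and v: "v \<in> pell_vertices (Suc n) k" for u v
    using u
  proof (cases rule: pell_vertices_SucE)
    case u': (1 a x)
    from v show ?thesis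
    proof (cases rule: pell_vertices_SucE)
      case v': (1 b y)
      obtain m1 where m1: "m1 < k" "pell_walk 1 k m1 [a] [b]"
        using pell_walk_letters[OF u'(1) v'(1)] .
      obtain m2 where m2: "m2 \<le> pell_diam_bound n k" "pell_walk n k m2 x y"
        using bounded[of n] u'(3) v'(3) unfolding pell_walks_bounded_def by blast
      have "pell_walk (Suc n) k (m1 + m2) u v"
        using pell_walk_append[OF m1(2) m2(2)] u' v' by simp
      moreover have "m1 + m2 \<le> pell_diam_bound (Suc n) k"
        using m1(1) m2(1) pell_diam_bound_Suc[of k n] k by simp
      ultimately show ?thesis by blast
    next
      case (2 y n')
      then show ?thesis using mixed[OF u'(1,2,3)] v by blast
    qed
  next
    case u': (2 x n')
    from v show ?thesis
    proof (cases rule: pell_vertices_SucE)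
      case (1 b y)
      then show ?thesis using mixed[OF _ _ _ u'(2)] u by blast
    next
      case v': (2 y n'')
      obtain m where m: "m \<le> pell_diam_bound n' k" "pell_walk n' k m x y"
        using bounded[of n'] u' v' unfolding pell_walks_bounded_def by force
      have "pell_walk (Suc n) k m u v"
        using pell_walk_append[OF pell_walk_kk_refl m(2)] u' v' by simp
      moreover have "m \<le> pell_diam_bound (Suc n) k"
        using m(1) pell_diam_bound_Suc_Suc[of k n'] u'(1) k by simp
      ultimately show ?thesis by blast
    qed
  qed
  then show ?thesis
    unfolding pell_walks_bounded_def by blast
qed

lemma all_pell_walks_bounded:
  assumes k: "2 \<le> k"
  shows "pell_walks_bounded n k"
proof -
  have "pell_walks_bounded n k \<and> pell_walks_to_kk_bounded n k"
  proof (induction n rule: less_induct)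
    case (less n)
    have to_kk: "pell_walks_to_kk_bounded n k"
    proof (cases "n < 2")
      case True
      then show ?thesis
        by (auto simp: pell_walks_to_kk_bounded_def pell_vertices_def)
    next
      case False
      then obtain n' where "n = Suc (Suc n')"
        by (metis add_2_eq_Suc le_add_diff_inverse not_less)
      then show ?thesis
        using pell_walks_to_kk_bounded_Suc_Suc[OF k] less.IH by simp
    qed
    have "pell_walks_bounded n k"
    proof (cases n)
      case 0
      then show ?thesis
        by (auto simp: pell_walks_bounded_def pell_vertices_def)
    next
      case (Suc n')
      then show ?thesis
        using pell_walks_bounded_Suc[OF k _ to_kk[unfolded Suc]] less.IH by simp
    qed
    then show ?case using to_kk ..
  qed
  then show ?thesis ..
qed

definition pell_letter_weight :: "nat \<Rightarrow> nat \<Rightarrow> nat" where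
  "pell_letter_weight k i = (if i < k then 2 * i else 2 * k - 1)"

definition pell_weight :: "nat \<Rightarrow> nat list \<Rightarrow> nat" where
  "pell_weight k w = sum_list (map (pell_letter_weight k) w)"

lemma pell_step_weight: "0 < k \<Longrightarrow> pell_step k u v \<Longrightarrow> pell_weight k v = pell_weight k u + 2"
  by (auto simp: pell_step_def pell_weight_def pell_letter_weight_def)

lemma pell_walk_weight_le:
  assumes "0 < k" "pell_walk n k m u v"
  shows "pell_weight k v \<le> pell_weight k u + 2 * m"
  using assms(2)
proof (induction m arbitrary: u)
  case (Suc m)
  then obtain w where w: "pell_adj n k u w" "pell_walk n k m w v"
    by auto
  then have "pell_weight k w \<le> pell_weight k u + 2"
    using pell_step_weight[OF assms(1), of u w] pell_step_weight[OF assms(1), of w u]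
    by (auto simp: pell_adj_def)
  then show ?case
    using Suc.IH[OF w(2)] by simp
qed simp

lemma pell_weight_le_dist:
  assumes "0 < k" "pell_walk n k m u v"
  shows "pell_weight k v \<le> pell_weight k u + 2 * pell_dist n k u v"
  using pell_walk_weight_le[OF assms(1) LeastI[of "\<lambda>m. pell_walk n k m u v", OF assms(2)]]
  by (simp add: pell_dist_def)

fun pell_top :: "nat \<Rightarrow> nat \<Rightarrow> nat list" where
  "pell_top 0 k = []"
| "pell_top (Suc 0) k = [k - 1]"
| "pell_top (Suc (Suc n)) k = k # k # pell_top n k"

lemma pell_top_vertex: "0 < k \<Longrightarrow> pell_top n k \<in> pell_vertices n k"
  by (induction n k rule: pell_top.induct)
    (auto simp: pell_vertices_def pell_string_Cons_less_iff pell_string_kk_iff pell_string.nil)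

lemma pell_weight_top: "0 < k \<Longrightarrow> pell_weight k (pell_top n k) = 2 * pell_diam_bound n k"
proof (induction n k rule: pell_top.induct)
  case (3 n k)
  then show ?case
    using pell_diam_bound_Suc_Suc[of k n]
    by (simp add: pell_weight_def pell_letter_weight_def)
qed (simp_all add: pell_weight_def pell_letter_weight_def pell_diam_bound_def)

lemma pell_zeros_vertex: "0 < k \<Longrightarrow> replicate n 0 \<in> pell_vertices n k"
  by (simp add: pell_vertices_def pell_string_replicate)

lemma pell_weight_zeros: "0 < k \<Longrightarrow> pell_weight k (replicate n 0) = 0"
  by (simp add: pell_weight_def pell_letter_weight_def sum_list_replicate)

lemma pell_dist_le: "pell_walk n k m u v \<Longrightarrow> pell_dist n k u v \<le> m"
  unfolding pell_dist_def by (rule Least_le)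

lemma pell_diam_eqI:
  assumes "\<And>u v. u \<in> pell_vertices n k \<Longrightarrow> v \<in> pell_vertices n k \<Longrightarrow> pell_dist n k u v \<le> d"
    and "u \<in> pell_vertices n k" "v \<in> pell_vertices n k" "pell_dist n k u v = d"
  shows "pell_diam n k = d"
proof -
  have "{pell_dist n k u v | u v. u \<in> pell_vertices n k \<and> v \<in> pell_vertices n k}
      = (\<lambda>(u, v). pell_dist n k u v) ` (pell_vertices n k \<times> pell_vertices n k)"
    by auto
  then show ?thesis
    unfolding pell_diam_def using assms finite_pell_vertices
    by (intro Max_eqI) auto
qed

lemma pell_dist_le_diam_bound:
  assumes "pell_walks_bounded n k" "u \<in> pell_vertices n k" "v \<in> pell_vertices n k"
  shows "pell_dist n k u v \<le> pell_diam_bound n k"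
  using assms pell_dist_le le_trans unfolding pell_walks_bounded_def by blast

lemma pell_dist_zeros_top:
  assumes "0 < k" "pell_walks_bounded n k"
  shows "pell_dist n k (replicate n 0) (pell_top n k) = pell_diam_bound n k"
proof -
  obtain m where "pell_walk n k m (replicate n 0) (pell_top n k)"
    using assms pell_zeros_vertex pell_top_vertex unfolding pell_walks_bounded_def by blast
  from pell_weight_le_dist[OF assms(1) this]
  have "pell_diam_bound n k \<le> pell_dist n k (replicate n 0) (pell_top n k)"
    using pell_weight_top[OF assms(1)] pell_weight_zeros[OF assms(1)] by simp
  then show ?thesis
    using pell_dist_le_diam_bound[OF assms(2)] pell_zeros_vertex[OF assms(1)]
      pell_top_vertex[OF assms(1)] by (simp add: antisym)
qed

theorem proposition4p3:
  fixes n k :: nat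
  assumes "n \<ge> 1" and "k \<ge> 2"
  shows "pell_connected n k \<and> pell_diam n k = n * k - (n + 1) div 2"
proof -
  have k: "0 < k" using assms(2) by simp
  have bounded: "pell_walks_bounded n k"
    using all_pell_walks_bounded[OF assms(2)] .
  then have "pell_connected n k"
    unfolding pell_connected_def pell_walks_bounded_def by blast
  moreover have "pell_diam n k = pell_diam_bound n k"
    using pell_diam_eqI[OF pell_dist_le_diam_bound[OF bounded] pell_zeros_vertex[OF k]
        pell_top_vertex[OF k] pell_dist_zeros_top[OF k bounded]] .
  ultimately show ?thesis
    by (simp add: pell_diam_bound_def)
qed

end
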